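(* Let $f:\mathbb{R}\to(0,\infty)$ be $C^4$, unimodal with maximum at $0$, of the form $f=e^{-H}$ with $H$ regularly varying (there is $\alpha>0$ with $H(tx)/H(t)\to x^\alpha$ as $|t|\to\infty$ for all $x>0$), and with $|(\log f)''''|<M$ for some $M>0$. Suppose there exists $\gamma>0$ such that $|\mathrm{Var}_{g_\beta}(Y^2)-2|=\mathcal{O}(\beta^{-\gamma})$ as $\beta\to\infty$, where $g_\beta(y)\propto f^\beta\big(y/\sqrt{-\beta h''(0)}\big)$ is a probability density. Then, as $\beta\to\infty$, $$\tfrac12V(\beta)-I(\beta)=\mathcal{O}(\beta^{-k}),$$ where in general $k=\min\{2+\gamma,5/2\}$, but if $h'''(0)=0$ then $k=\min\{2+\gamma,3\}$.
   Context: $h=\log f$, $k(x)=xh'(x)$; $\mathrm{Var}_\beta,\mathrm{Cov}_\beta$ are moments under $f^\beta/\int f^\beta$. $I(\beta)=\mathrm{Var}_\beta(h(X))$ and $V(\beta)=\mathrm{Cov}_\beta(h(X),k(X))$. *)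

theory Defs
  imports "HOL-Analysis.Analysis" "HOL-Library.Landau_Symbols"
begin

definition wmean :: "(real \<Rightarrow> real) \<Rightarrow> (real \<Rightarrow> real) \<Rightarrow> real" where
  "wmean w \<phi> = (\<integral>x. \<phi> x * w x \<partial>lborel) / (\<integral>x. w x \<partial>lborel)"

definition wvar :: "(real \<Rightarrow> real) \<Rightarrow> (real \<Rightarrow> real) \<Rightarrow> real" where
  "wvar w \<phi> = wmean w (\<lambda>x. (\<phi> x)^2) - (wmean w \<phi>)^2"

definition wcov :: "(real \<Rightarrow> real) \<Rightarrow> (real \<Rightarrow> real) \<Rightarrow> (real \<Rightarrow> real) \<Rightarrow> real" where
  "wcov w \<phi> \<psi> = wmean w (\<lambda>x. \<phi> x * \<psi> x) - wmean w \<phi> * wmean w \<psi>"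

definition hfun :: "(real \<Rightarrow> real) \<Rightarrow> real \<Rightarrow> real" where
  "hfun f = (\<lambda>x. ln (f x))"

definition kfun :: "(real \<Rightarrow> real) \<Rightarrow> real \<Rightarrow> real" where
  "kfun f = (\<lambda>x. x * deriv (hfun f) x)"

definition tilt :: "(real \<Rightarrow> real) \<Rightarrow> real \<Rightarrow> real \<Rightarrow> real" where
  "tilt f \<beta> = (\<lambda>x. f x powr \<beta>)"

definition Ifun :: "(real \<Rightarrow> real) \<Rightarrow> real \<Rightarrow> real" where
  "Ifun f \<beta> = wvar (tilt f \<beta>) (hfun f)"

definition Vfun :: "(real \<Rightarrow> real) \<Rightarrow> real \<Rightarrow> real" where
  "Vfun f \<beta> = wcov (tilt f \<beta>) (hfun f) (kfun f)"

definition gdens :: "(real \<Rightarrow> real) \<Rightarrow> real \<Rightarrow> real \<Rightarrow> real" where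
  "gdens f \<beta> = (\<lambda>y. f (y / sqrt (- \<beta> * (deriv ^^ 2) (hfun f) 0)) powr \<beta>)"

end

theory Submission
  imports Defs "HOL-Probability.Distributions" "HOL-Probability.Sinc_Integral" "HOL-Real_Asymp.Real_Asymp"
begin

(* Write h = log f = h(0) + U and D(x) = x h'(x)/2 - U(x). Then k/2 - h = D - h(0), and bilinearity
   of the covariance gives V/2 - I = Cov_beta(U, D). Taylor expansion of h at its maximum 0 yields
   |U(x)| <= C (x^2 + x^4) and |D(x)| <= C (|x|^3 + x^4), even |D(x)| <= C x^4 if h'''(0) = 0,
   because D vanishes for quadratic h. Under the tilted density, proportional to exp(beta U),
   Laplace's method gives E|x|^m = O(beta^(-m/2)): near 0 compare with a Gaussian of variance
   of order 1/beta, away from 0 the weight is exponentially small, and the tails are harmless since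
   a regularly varying H grows at least like a power. Hence |Cov(U, D)| <= E|U D| + E|U| E|D| is
   O(beta^(-5/2)), and O(beta^(-3)) if h'''(0) = 0, which implies the claim for every gamma > 0.
   The variance hypothesis is used only to rule out h''(0) = 0. *)

section \<open>Functions with derivatives up to a given order\<close>

definition higher_differentiable :: "nat \<Rightarrow> (real \<Rightarrow> real) \<Rightarrow> bool" where
  "higher_differentiable n g \<longleftrightarrow>
     (\<forall>m<n. \<forall>x. ((deriv ^^ m) g has_real_derivative (deriv ^^ Suc m) g x) (at x))"

lemma higher_differentiable_0 [simp]: "higher_differentiable 0 g"
  by (simp add: higher_differentiable_def)

lemma higher_differentiable_Suc:
  "higher_differentiable (Suc n) g \<longleftrightarrow>
     (\<forall>x. (g has_real_derivative deriv g x) (at x)) \<and> higher_differentiable n (deriv g)"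
  unfolding higher_differentiable_def
  by (auto simp: less_Suc_eq_0_disj funpow_Suc_right simp del: funpow.simps)

lemma higher_differentiable_DERIV:
  "higher_differentiable (Suc n) g \<Longrightarrow> (g has_real_derivative deriv g x) (at x)"
  by (simp add: higher_differentiable_Suc)

lemma higher_differentiable_continuous:
  "higher_differentiable (Suc n) g \<Longrightarrow> continuous_on UNIV g"
  using higher_differentiable_DERIV
  by (intro continuous_at_imp_continuous_on) (blast intro: DERIV_isCont)

lemma higher_differentiable_mono:
  "higher_differentiable n g \<Longrightarrow> m \<le> n \<Longrightarrow> higher_differentiable m g"
  by (auto simp: higher_differentiable_def)

lemma higher_differentiable_SucI:
  assumes "\<And>x. (g has_real_derivative g' x) (at x)" and "higher_differentiable n g'"
  shows "higher_differentiable (Suc n) g"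
proof -
  have "deriv g = g'"
    using assms(1) by (auto intro: DERIV_imp_deriv)
  then show ?thesis
    using assms by (simp add: higher_differentiable_Suc)
qed

lemma higher_differentiable_add:
  "higher_differentiable n p \<Longrightarrow> higher_differentiable n q \<Longrightarrow>
     higher_differentiable n (\<lambda>x. p x + q x)"
proof (induction n arbitrary: p q)
  case (Suc n)
  have "\<And>x. ((\<lambda>x. p x + q x) has_real_derivative deriv p x + deriv q x) (at x)"
    using Suc.prems by (auto simp: higher_differentiable_Suc intro!: derivative_eq_intros)
  moreover have "higher_differentiable n (\<lambda>x. deriv p x + deriv q x)"
    using Suc.prems by (auto simp: higher_differentiable_Suc intro: Suc.IH)
  ultimately show ?case
    by (rule higher_differentiable_SucI)
qed simp

lemma higher_differentiable_uminus:
  "higher_differentiable n p \<Longrightarrow> higher_differentiable n (\<lambda>x. - p x)"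
proof (induction n arbitrary: p)
  case (Suc n)
  have "\<And>x. ((\<lambda>x. - p x) has_real_derivative - deriv p x) (at x)"
    using Suc.prems by (auto simp: higher_differentiable_Suc intro!: derivative_eq_intros)
  moreover have "higher_differentiable n (\<lambda>x. - deriv p x)"
    using Suc.prems by (auto simp: higher_differentiable_Suc intro: Suc.IH)
  ultimately show ?case
    by (rule higher_differentiable_SucI)
qed simp

lemma higher_differentiable_mult:
  "higher_differentiable n p \<Longrightarrow> higher_differentiable n q \<Longrightarrow>
     higher_differentiable n (\<lambda>x. p x * q x)"
proof (induction n arbitrary: p q)
  case (Suc n)
  have "\<And>x. ((\<lambda>x. p x * q x) has_real_derivative deriv p x * q x + p x * deriv q x) (at x)"
    using Suc.prems by (auto simp: higher_differentiable_Suc intro!: derivative_eq_intros)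
  moreover have "higher_differentiable n p" "higher_differentiable n q"
    using Suc.prems higher_differentiable_mono le_SucI by blast+
  then have "higher_differentiable n (\<lambda>x. deriv p x * q x + p x * deriv q x)"
    using Suc.prems by (auto simp: higher_differentiable_Suc intro!: higher_differentiable_add Suc.IH)
  ultimately show ?case
    by (rule higher_differentiable_SucI)
qed simp

lemma higher_differentiable_inverse:
  assumes "higher_differentiable n q" "\<And>x. q x \<noteq> 0"
  shows "higher_differentiable n (\<lambda>x. inverse (q x))"
  using assms(1)
proof (induction n)
  case (Suc n)
  have "\<And>x. ((\<lambda>x. inverse (q x)) has_real_derivative
           - (deriv q x * (inverse (q x) * inverse (q x)))) (at x)"
    using Suc.prems assms(2) by (auto simp: higher_differentiable_Suc power2_eq_square
      intro!: derivative_eq_intros)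
  moreover have "higher_differentiable n (\<lambda>x. inverse (q x))"
    using Suc higher_differentiable_mono le_SucI by blast
  then have "higher_differentiable n (\<lambda>x. - (deriv q x * (inverse (q x) * inverse (q x))))"
    using Suc.prems by (auto simp: higher_differentiable_Suc
      intro!: higher_differentiable_uminus higher_differentiable_mult)
  ultimately show ?case
    by (rule higher_differentiable_SucI)
qed simp

lemma higher_differentiable_ln:
  assumes "higher_differentiable (Suc n) f" "\<And>x. f x > 0"
  shows "higher_differentiable (Suc n) (\<lambda>x. ln (f x))"
proof -
  have "\<And>x. ((\<lambda>x. ln (f x)) has_real_derivative deriv f x * inverse (f x)) (at x)"
    using assms by (auto simp: higher_differentiable_Suc field_simps intro!: derivative_eq_intros)
  moreover have "higher_differentiable n (\<lambda>x. inverse (f x))"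
    using assms by (intro higher_differentiable_inverse higher_differentiable_mono[OF assms(1)])
      (auto simp: less_imp_neq[symmetric])
  then have "higher_differentiable n (\<lambda>x. deriv f x * inverse (f x))"
    using assms(1) by (auto simp: higher_differentiable_Suc intro!: higher_differentiable_mult)
  ultimately show ?thesis
    by (rule higher_differentiable_SucI)
qed

section \<open>Taylor expansion at a critical point\<close>

lemma maclaurin_cubic_bound:
  assumes "higher_differentiable 4 g" and "deriv g 0 = 0" and "\<And>x. \<bar>(deriv ^^ 4) g x\<bar> \<le> M"
  shows "\<bar>g x - g 0 - (deriv ^^ 2) g 0 / 2 * x^2 - (deriv ^^ 3) g 0 / 6 * x^3\<bar> \<le> M / 24 * x^4"
proof -
  obtain t where "g x = (\<Sum>m<4. (deriv ^^ m) g 0 / fact m * x ^ m) + (deriv ^^ 4) g t / fact 4 * x ^ 4"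
    using Maclaurin_bi_le[of "\<lambda>m. (deriv ^^ m) g" g 4 x] assms(1)
    by (auto simp: higher_differentiable_def)
  then have "g x - g 0 - (deriv ^^ 2) g 0 / 2 * x^2 - (deriv ^^ 3) g 0 / 6 * x^3
      = (deriv ^^ 4) g t / 24 * x ^ 4"
    using assms(2) by (simp add: eval_nat_numeral fact_numeral)
  also have "\<bar>\<dots>\<bar> \<le> M / 24 * x^4"
    using assms(3)[of t] by (simp add: abs_mult mult_right_mono)
  finally show ?thesis .
qed

lemma maclaurin_deriv_quadratic_bound:
  assumes "higher_differentiable 4 g" and "\<And>x. \<bar>(deriv ^^ 4) g x\<bar> \<le> M"
  shows "\<bar>deriv g x - deriv g 0 - (deriv ^^ 2) g 0 * x - (deriv ^^ 3) g 0 / 2 * x^2\<bar> \<le> M / 6 * \<bar>x\<bar>^3"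
proof -
  have "higher_differentiable 3 (deriv g)"
    using assms(1) by (simp add: higher_differentiable_Suc numeral_eq_Suc)
  then obtain t where "deriv g x = (\<Sum>m<3. (deriv ^^ Suc m) g 0 / fact m * x ^ m)
      + (deriv ^^ 4) g t / fact 3 * x ^ 3"
    using Maclaurin_bi_le[of "\<lambda>m. (deriv ^^ m) (deriv g)" "deriv g" 3 x]
    by (auto simp: higher_differentiable_def funpow_Suc_right numeral_eq_Suc simp del: funpow.simps)
  then have "deriv g x - deriv g 0 - (deriv ^^ 2) g 0 * x - (deriv ^^ 3) g 0 / 2 * x^2
      = (deriv ^^ 4) g t / 6 * x ^ 3"
    by (simp add: eval_nat_numeral fact_numeral)
  also have "\<bar>\<dots>\<bar> \<le> M / 6 * \<bar>x\<bar>^3"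
    using assms(2)[of t] by (simp add: abs_mult power_abs mult_right_mono)
  finally show ?thesis .
qed

lemma second_deriv_nonpos_at_max:
  assumes "higher_differentiable 3 g" and "\<And>x. g x \<le> g 0"
  shows "(deriv ^^ 2) g 0 \<le> 0"
proof (rule ccontr)
  assume "\<not> (deriv ^^ 2) g 0 \<le> 0"
  have "isCont ((deriv ^^ 2) g) 0"
    using assms(1)[unfolded higher_differentiable_def, rule_format, of 2 0]
    by (auto intro: DERIV_isCont)
  then have "eventually (\<lambda>t. (deriv ^^ 2) g t > 0) (at 0)"
    using \<open>\<not> (deriv ^^ 2) g 0 \<le> 0\<close> by (auto simp: isCont_def intro: order_tendstoD(1))
  then obtain d where "d > 0" and near: "\<And>t. t \<noteq> 0 \<Longrightarrow> \<bar>t\<bar> < d \<Longrightarrow> (deriv ^^ 2) g t > 0"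
    unfolding eventually_at dist_real_def by auto
  have d: "(deriv ^^ 2) g t > 0" if "\<bar>t\<bar> < d" for t
    using near[of t] that \<open>\<not> (deriv ^^ 2) g 0 \<le> 0\<close> by (cases "t = 0") auto
  have "deriv g 0 = 0"
    using assms higher_differentiable_DERIV[of 2 g] by (intro DERIV_local_max[of g _ 0 1]) auto
  then obtain t where "\<bar>t\<bar> \<le> d / 2" and t: "g (d / 2) = g 0 + (deriv ^^ 2) g t / 2 * (d / 2) ^ 2"
    using Maclaurin_bi_le[of "\<lambda>m. (deriv ^^ m) g" g 2 "d / 2"] assms(1) \<open>d > 0\<close>
    by (auto simp: higher_differentiable_def eval_nat_numeral)
  have "(deriv ^^ 2) g t / 2 * (d / 2) ^ 2 > 0"
    using d[of t] \<open>\<bar>t\<bar> \<le> d / 2\<close> \<open>d > 0\<close> by simp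
  then show False
    using t assms(2)[of "d / 2"] by linarith
qed

(* The left-hand side vanishes for quadratic g, so only the cubic Taylor term survives. *)
lemma homogeneity_defect_bound:
  assumes "higher_differentiable 4 g" and "deriv g 0 = 0" and "\<And>x. \<bar>(deriv ^^ 4) g x\<bar> \<le> M"
  shows "\<bar>x * deriv g x / 2 - (g x - g 0) - (deriv ^^ 3) g 0 / 12 * x^3\<bar> \<le> M / 8 * x^4"
proof -
  define a b where "a = (deriv ^^ 2) g 0" and "b = (deriv ^^ 3) g 0"
  define r0 where "r0 = g x - g 0 - a / 2 * x^2 - b / 6 * x^3"
  define r1 where "r1 = deriv g x - a * x - b / 2 * x^2"
  have "\<bar>r0\<bar> \<le> M / 24 * x^4"
    using maclaurin_cubic_bound[OF assms] by (simp add: r0_def a_def b_def)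
  moreover have "\<bar>x * r1 / 2\<bar> \<le> M / 12 * x^4"
  proof -
    have "\<bar>r1\<bar> \<le> M / 6 * \<bar>x\<bar>^3"
      using maclaurin_deriv_quadratic_bound[OF assms(1,3)] assms(2) by (simp add: r1_def a_def b_def)
    then have "\<bar>x\<bar> * \<bar>r1\<bar> \<le> \<bar>x\<bar> * (M / 6 * \<bar>x\<bar>^3)"
      by (rule mult_left_mono) simp
    then show ?thesis
      by (simp add: abs_mult power_abs[symmetric] eval_nat_numeral mult_ac)
  qed
  moreover have "x * deriv g x / 2 - (g x - g 0) - b / 12 * x^3 = x * r1 / 2 - r0"
    unfolding r0_def r1_def by (simp add: field_simps power2_eq_square power3_eq_cube)
  ultimately show ?thesis
    unfolding b_def by linarith
qed

section \<open>Weighted means\<close>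

lemma wmean_cmult: "wmean w (\<lambda>x. c * \<phi> x) = c * wmean w \<phi>"
  by (simp add: wmean_def mult.assoc)

lemma wmean_add:
  assumes "integrable lborel (\<lambda>x. \<phi> x * w x)" and "integrable lborel (\<lambda>x. \<psi> x * w x)"
  shows "wmean w (\<lambda>x. \<phi> x + \<psi> x) = wmean w \<phi> + wmean w \<psi>"
  using assms by (simp add: wmean_def distrib_right add_divide_distrib)

lemma wmean_mono:
  assumes "integrable lborel (\<lambda>x. \<phi> x * w x)" and "integrable lborel (\<lambda>x. \<psi> x * w x)"
    and "\<And>x. w x \<ge> 0" and "(\<integral>x. w x \<partial>lborel) > 0" and "\<And>x. \<phi> x \<le> \<psi> x"
  shows "wmean w \<phi> \<le> wmean w \<psi>"
  unfolding wmean_def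
  using assms by (intro divide_right_mono integral_mono) (auto intro: mult_right_mono)

lemma wmean_nonneg:
  "(\<And>x. w x \<ge> 0) \<Longrightarrow> (\<And>x. \<phi> x \<ge> 0) \<Longrightarrow> wmean w \<phi> \<ge> 0"
  unfolding wmean_def by (intro divide_nonneg_nonneg integral_nonneg_AE) auto

lemma abs_wmean_le:
  assumes "integrable lborel (\<lambda>x. \<phi> x * w x)"
    and "\<And>x. w x \<ge> 0" and "(\<integral>x. w x \<partial>lborel) > 0"
  shows "\<bar>wmean w \<phi>\<bar> \<le> wmean w (\<lambda>x. \<bar>\<phi> x\<bar>)"
proof -
  have "\<bar>\<integral>x. \<phi> x * w x \<partial>lborel\<bar> \<le> (\<integral>x. \<bar>\<phi> x\<bar> * w x \<partial>lborel)"
    using integral_abs_bound[of lborel "\<lambda>x. \<phi> x * w x"] assms(2)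
    by (simp add: abs_mult)
  then show ?thesis
    using assms(3) by (simp add: wmean_def abs_divide divide_right_mono)
qed

lemma wmean_scale_weight: "c \<noteq> 0 \<Longrightarrow> wmean (\<lambda>x. c * w x) = wmean w"
  by (simp add: wmean_def fun_eq_iff mult.left_commute)

lemma wcov_scale_weight: "c \<noteq> 0 \<Longrightarrow> wcov (\<lambda>x. c * w x) = wcov w"
  by (simp add: wcov_def fun_eq_iff wmean_scale_weight)

lemma wvar_scale_weight: "c \<noteq> 0 \<Longrightarrow> wvar (\<lambda>x. c * w x) = wvar w"
  by (simp add: wvar_def fun_eq_iff wmean_scale_weight)

lemma abs_wcov_le:
  assumes "integrable lborel (\<lambda>x. \<phi> x * \<psi> x * w x)"
    and "integrable lborel (\<lambda>x. \<phi> x * w x)" and "integrable lborel (\<lambda>x. \<psi> x * w x)"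
    and "\<And>x. w x \<ge> 0" and "(\<integral>x. w x \<partial>lborel) > 0"
  shows "\<bar>wcov w \<phi> \<psi>\<bar> \<le>
    wmean w (\<lambda>x. \<bar>\<phi> x * \<psi> x\<bar>) + wmean w (\<lambda>x. \<bar>\<phi> x\<bar>) * wmean w (\<lambda>x. \<bar>\<psi> x\<bar>)"
proof -
  have "\<bar>wcov w \<phi> \<psi>\<bar> \<le> \<bar>wmean w (\<lambda>x. \<phi> x * \<psi> x)\<bar> + \<bar>wmean w \<phi>\<bar> * \<bar>wmean w \<psi>\<bar>"
    unfolding wcov_def by (metis abs_mult abs_triangle_ineq4)
  also have "\<dots> \<le> wmean w (\<lambda>x. \<bar>\<phi> x * \<psi> x\<bar>) + wmean w (\<lambda>x. \<bar>\<phi> x\<bar>) * wmean w (\<lambda>x. \<bar>\<psi> x\<bar>)"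
    using assms by (intro add_mono mult_mono abs_wmean_le wmean_nonneg) auto
  finally show ?thesis .
qed

lemma wcov_half_minus_wvar:
  assumes "(\<integral>x. w x \<partial>lborel) \<noteq> 0" and "integrable lborel w"
    and "integrable lborel (\<lambda>x. \<phi> x * w x)" and "integrable lborel (\<lambda>x. \<psi> x * w x)"
    and "integrable lborel (\<lambda>x. \<phi> x * \<psi> x * w x)" and "integrable lborel (\<lambda>x. \<phi> x * \<phi> x * w x)"
  shows "wcov w (\<lambda>x. \<phi> x + c) \<psi> / 2 - wvar w (\<lambda>x. \<phi> x + c) = wcov w \<phi> (\<lambda>x. \<psi> x / 2 - \<phi> x)"
proof -
  define I where "I g = (\<integral>x. g x * w x \<partial>lborel)" for g :: "real \<Rightarrow> real"
  define Z where "Z = (\<integral>x. w x \<partial>lborel)"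
  have mean: "wmean w g = I g / Z" for g
    by (simp add: wmean_def I_def Z_def)
  have "(\<lambda>x. (\<phi> x + c)^2 * w x) = (\<lambda>x. \<phi> x * \<phi> x * w x + 2 * c * (\<phi> x * w x) + c^2 * w x)"
    by (simp add: fun_eq_iff algebra_simps power2_eq_square)
  then have sq: "I (\<lambda>x. (\<phi> x + c)^2) = I (\<lambda>x. \<phi> x * \<phi> x) + 2 * c * I \<phi> + c^2 * Z"
    using assms(2-) by (simp add: I_def Z_def)
  have lin: "I (\<lambda>x. (\<phi> x + c) * \<psi> x) = I (\<lambda>x. \<phi> x * \<psi> x) + c * I \<psi>"
    "I (\<lambda>x. \<phi> x + c) = I \<phi> + c * Z"
    "I (\<lambda>x. \<psi> x / 2 - \<phi> x) = I \<psi> / 2 - I \<phi>"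
    "I (\<lambda>x. \<phi> x * (\<psi> x / 2 - \<phi> x)) = I (\<lambda>x. \<phi> x * \<psi> x) / 2 - I (\<lambda>x. \<phi> x * \<phi> x)"
    using assms(2-) by (simp_all add: I_def Z_def algebra_simps)
  show ?thesis
    using assms(1) unfolding wcov_def wvar_def mean sq lin Z_def[symmetric]
    by (simp add: field_simps power2_eq_square)
qed

section \<open>Functions bounded by two powers\<close>

lemma abs_power_le_add:
  assumes "p \<le> j" and "j \<le> q"
  shows "\<bar>x::real\<bar> ^ j \<le> \<bar>x\<bar> ^ p + \<bar>x\<bar> ^ q"
proof (cases "\<bar>x\<bar> \<le> 1")
  case True
  then have "\<bar>x\<bar> ^ j \<le> \<bar>x\<bar> ^ p"
    using assms(1) by (simp add: power_decreasing)
  then show ?thesis by (simp add: add_increasing2)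
next
  case False
  then have "\<bar>x\<bar> ^ j \<le> \<bar>x\<bar> ^ q"
    using assms(2) by (simp add: power_increasing)
  then show ?thesis by (simp add: add_increasing)
qed

definition power_bounded :: "nat \<Rightarrow> nat \<Rightarrow> (real \<Rightarrow> real) \<Rightarrow> bool" where
  "power_bounded p q \<phi> \<longleftrightarrow> (\<exists>C. \<forall>x. \<bar>\<phi> x\<bar> \<le> C * (\<bar>x\<bar> ^ p + \<bar>x\<bar> ^ q))"

lemma power_boundedI: "(\<And>x. \<bar>\<phi> x\<bar> \<le> C * (\<bar>x\<bar> ^ p + \<bar>x\<bar> ^ q)) \<Longrightarrow> power_bounded p q \<phi>"
  unfolding power_bounded_def by blast

lemma power_bounded_abs_power: "p \<le> j \<Longrightarrow> j \<le> q \<Longrightarrow> power_bounded p q (\<lambda>x. \<bar>x\<bar> ^ j)"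
  by (rule power_boundedI[of _ 1]) (simp add: abs_power_le_add)

lemma power_bounded_const: "power_bounded 0 0 (\<lambda>_. c)"
  by (rule power_boundedI[of _ "\<bar>c\<bar>"]) simp

lemma power_bounded_add:
  assumes "power_bounded p q \<phi>" and "power_bounded p q \<psi>"
  shows "power_bounded p q (\<lambda>x. \<phi> x + \<psi> x)"
proof -
  obtain C D where "\<And>x. \<bar>\<phi> x\<bar> \<le> C * (\<bar>x\<bar> ^ p + \<bar>x\<bar> ^ q)" "\<And>x. \<bar>\<psi> x\<bar> \<le> D * (\<bar>x\<bar> ^ p + \<bar>x\<bar> ^ q)"
    using assms by (auto simp: power_bounded_def)
  then have "\<bar>\<phi> x + \<psi> x\<bar> \<le> (C + D) * (\<bar>x\<bar> ^ p + \<bar>x\<bar> ^ q)" for x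
    unfolding distrib_right by (rule order_trans[OF abs_triangle_ineq add_mono])
  then show ?thesis by (rule power_boundedI)
qed

lemma power_bounded_mono:
  assumes "power_bounded p q \<phi>" and "p' \<le> p" and "p \<le> q" and "q \<le> q'"
  shows "power_bounded p' q' \<phi>"
proof -
  obtain C where C: "\<And>x. \<bar>\<phi> x\<bar> \<le> C * (\<bar>x\<bar> ^ p + \<bar>x\<bar> ^ q)"
    using assms by (auto simp: power_bounded_def)
  have "C \<ge> 0"
    using C[of 1] by simp
  have "\<bar>\<phi> x\<bar> \<le> (2 * C) * (\<bar>x\<bar> ^ p' + \<bar>x\<bar> ^ q')" for x
  proof -
    have "\<bar>x\<bar> ^ p \<le> \<bar>x\<bar> ^ p' + \<bar>x\<bar> ^ q'" "\<bar>x\<bar> ^ q \<le> \<bar>x\<bar> ^ p' + \<bar>x\<bar> ^ q'"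
      using assms by (auto intro: abs_power_le_add)
    then have "\<bar>x\<bar> ^ p + \<bar>x\<bar> ^ q \<le> 2 * (\<bar>x\<bar> ^ p' + \<bar>x\<bar> ^ q')"
      unfolding mult_2 by (rule add_mono)
    then have "C * (\<bar>x\<bar> ^ p + \<bar>x\<bar> ^ q) \<le> C * (2 * (\<bar>x\<bar> ^ p' + \<bar>x\<bar> ^ q'))"
      using \<open>C \<ge> 0\<close> by (rule mult_left_mono)
    then show ?thesis
      using order_trans[OF C[of x]] by (simp add: mult_ac)
  qed
  then show ?thesis by (rule power_boundedI)
qed

lemma power_bounded_mult:
  assumes "power_bounded p q \<phi>" and "power_bounded p' q' \<psi>" and "p \<le> q" and "p' \<le> q'"
  shows "power_bounded (p + p') (q + q') (\<lambda>x. \<phi> x * \<psi> x)"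
proof -
  obtain C D where C: "\<And>x. \<bar>\<phi> x\<bar> \<le> C * (\<bar>x\<bar> ^ p + \<bar>x\<bar> ^ q)"
    and D: "\<And>x. \<bar>\<psi> x\<bar> \<le> D * (\<bar>x\<bar> ^ p' + \<bar>x\<bar> ^ q')"
    using assms by (auto simp: power_bounded_def)
  have "C * D \<ge> 0"
    using C[of 1] D[of 1] by simp
  have "\<bar>\<phi> x * \<psi> x\<bar> \<le> (3 * C * D) * (\<bar>x\<bar> ^ (p + p') + \<bar>x\<bar> ^ (q + q'))" for x
  proof -
    have "\<bar>x\<bar> ^ (p + q') \<le> \<bar>x\<bar> ^ (p + p') + \<bar>x\<bar> ^ (q + q')"
      "\<bar>x\<bar> ^ (q + p') \<le> \<bar>x\<bar> ^ (p + p') + \<bar>x\<bar> ^ (q + q')"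
      using assms(3,4) by (auto intro: abs_power_le_add)
    then have "(\<bar>x\<bar> ^ p + \<bar>x\<bar> ^ q) * (\<bar>x\<bar> ^ p' + \<bar>x\<bar> ^ q')
        \<le> 3 * (\<bar>x\<bar> ^ (p + p') + \<bar>x\<bar> ^ (q + q'))"
      by (simp add: algebra_simps power_add)
    have "\<bar>\<phi> x * \<psi> x\<bar> \<le> (C * (\<bar>x\<bar> ^ p + \<bar>x\<bar> ^ q)) * (D * (\<bar>x\<bar> ^ p' + \<bar>x\<bar> ^ q'))"
      unfolding abs_mult by (rule mult_mono[OF C D]) (use C[of x] in auto)
    also have "\<dots> = (C * D) * ((\<bar>x\<bar> ^ p + \<bar>x\<bar> ^ q) * (\<bar>x\<bar> ^ p' + \<bar>x\<bar> ^ q'))"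
      by (simp only: mult_ac)
    also have "\<dots> \<le> (C * D) * (3 * (\<bar>x\<bar> ^ (p + p') + \<bar>x\<bar> ^ (q + q')))"
      using \<open>(\<bar>x\<bar> ^ p + \<bar>x\<bar> ^ q) * _ \<le> _\<close> \<open>C * D \<ge> 0\<close> by (rule mult_left_mono)
    finally show ?thesis
      by (simp only: mult_ac)
  qed
  then show ?thesis by (rule power_boundedI)
qed

lemma power_bounded_of_quadratic_expansion:
  assumes "\<And>x. \<bar>\<phi> x - a * x^2 - b * x^3\<bar> \<le> C * x^4"
  shows "power_bounded 2 4 \<phi>"
proof (rule power_boundedI)
  fix x :: real
  define S where "S = \<bar>x\<bar>^2 + \<bar>x\<bar>^4"
  have "\<bar>\<phi> x\<bar> \<le> \<bar>\<phi> x - a * x^2 - b * x^3\<bar> + \<bar>a * x^2\<bar> + \<bar>b * x^3\<bar>"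
    using abs_triangle_ineq[of "\<phi> x - a * x^2 - b * x^3" "a * x^2 + b * x^3"]
      abs_triangle_ineq[of "a * x^2" "b * x^3"] by simp
  moreover have "\<bar>x\<bar>^3 \<le> S"
    unfolding S_def by (rule abs_power_le_add) auto
  then have "\<bar>b * x^3\<bar> \<le> \<bar>b\<bar> * S"
    by (simp add: abs_mult power_abs mult_left_mono)
  moreover have "\<bar>a * x^2\<bar> \<le> \<bar>a\<bar> * S" "C * x^4 \<le> \<bar>C\<bar> * S"
    by (auto simp: S_def abs_mult intro!: mult_mono)
  ultimately show "\<bar>\<phi> x\<bar> \<le> (\<bar>a\<bar> + \<bar>b\<bar> + \<bar>C\<bar>) * (\<bar>x\<bar>^2 + \<bar>x\<bar>^4)"
    using assms[of x] unfolding S_def[symmetric] distrib_right by linarith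
qed

lemma power_bounded_of_cubic_expansion:
  assumes "\<And>x. \<bar>\<phi> x - b * x^3\<bar> \<le> C * x^4"
  shows "power_bounded (if b = 0 then 4 else 3) 4 \<phi>"
proof (rule power_boundedI)
  fix x :: real
  have "C * x^4 \<le> \<bar>C\<bar> * \<bar>x\<bar>^4"
    by (simp add: mult_right_mono)
  moreover have "\<bar>b * x^3\<bar> = \<bar>b\<bar> * \<bar>x\<bar>^3"
    by (simp add: abs_mult power_abs)
  ultimately have "\<bar>\<phi> x\<bar> \<le> \<bar>b\<bar> * \<bar>x\<bar>^3 + \<bar>C\<bar> * \<bar>x\<bar>^4"
    using assms[of x] by (simp add: abs_le_iff) linarith
  then show "\<bar>\<phi> x\<bar> \<le> (\<bar>b\<bar> + \<bar>C\<bar>) *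
      (\<bar>x\<bar> ^ (if b = 0 then 4 else 3) + \<bar>x\<bar> ^ 4)"
    by (auto simp: algebra_simps intro: order_trans add_mono mult_left_mono)
qed

section \<open>Moments of regularly varying densities\<close>

lemma regularly_varying_doubling:
  fixes H :: "real \<Rightarrow> real"
  assumes lim: "((\<lambda>t. H (t * 2) / H t) \<longlongrightarrow> 2 powr \<alpha>) at_infinity" and "\<alpha> > 0"
    and doubling_mono: "\<And>t. H t \<le> H (t * 2)"
  obtains T r where "T > 0" and "r > 1" and "\<And>t. T \<le> \<bar>t\<bar> \<Longrightarrow> H t > 0 \<and> r * H t \<le> H (t * 2)"
proof -
  define r where "r = (1 + 2 powr \<alpha>) / 2"
  have "2 powr \<alpha> > 1"
    using \<open>\<alpha> > 0\<close> by (simp add: gr_one_powr)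
  then have "r > 1" and "r < 2 powr \<alpha>"
    by (auto simp: r_def)
  obtain T0 where T0: "\<And>t. T0 \<le> norm t \<Longrightarrow> H (t * 2) / H t > r"
    using order_tendstoD(1)[OF lim \<open>r < 2 powr \<alpha>\<close>] unfolding eventually_at_infinity by blast
  have "H t > 0 \<and> r * H t \<le> H (t * 2)" if "max T0 1 \<le> \<bar>t\<bar>" for t
  proof -
    have ratio: "H (t * 2) / H t > r"
      using T0 that by simp
    have "H t > 0"
    proof (rule ccontr)
      assume "\<not> H t > 0"
      then have "H t < 0"
        using ratio \<open>r > 1\<close> by (cases "H t = 0") auto
      then have "H (t * 2) < r * H t"
        using ratio by (simp add: neg_less_divide_eq mult.commute)
      also have "r * H t < H t"
        using \<open>H t < 0\<close> \<open>r > 1\<close> by simp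
      finally show False
        using doubling_mono[of t] by simp
    qed
    then show ?thesis
      using ratio by (simp add: pos_less_divide_eq mult.commute less_imp_le)
  qed
  then show ?thesis
    using that[of "max T0 1" r] \<open>r > 1\<close> by simp
qed

lemma doubling_dyadic_growth:
  fixes H :: "real \<Rightarrow> real"
  assumes "T > 0" and "d \<ge> 0" and "c0 \<ge> 0" and base: "\<And>x. T \<le> \<bar>x\<bar> \<Longrightarrow> c0 \<le> H x"
    and doubling: "\<And>t. T \<le> \<bar>t\<bar> \<Longrightarrow> 2 powr d * H t \<le> H (t * 2)"
    and "T \<le> \<bar>x\<bar>"
  shows "c0 * (\<bar>x\<bar> / (2 * T)) powr d \<le> H x"
proof -
  obtain j where "\<bar>x\<bar> / T < 2 ^ j"
    using real_arch_pow[of 2 "\<bar>x\<bar> / T"] by auto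
  then have "\<bar>x\<bar> < 2 ^ j * T"
    using \<open>T > 0\<close> by (simp add: divide_less_eq)
  with \<open>T \<le> \<bar>x\<bar>\<close> show ?thesis
  proof (induction j arbitrary: x)
    case (Suc j)
    show ?case
    proof (cases "\<bar>x\<bar> < 2 * T")
      case True
      then have "c0 * (\<bar>x\<bar> / (2 * T)) powr d \<le> c0"
        using \<open>T > 0\<close> \<open>d \<ge> 0\<close> \<open>c0 \<ge> 0\<close> powr_mono2[of d "\<bar>x\<bar> / (2 * T)" 1]
        by (intro mult_left_le) auto
      then show ?thesis
        using base[OF Suc.prems(1)] by linarith
    next
      case False
      then have "c0 * (\<bar>x / 2\<bar> / (2 * T)) powr d \<le> H (x / 2)"
        using Suc.prems by (intro Suc.IH) auto
      then have "2 powr d * (c0 * (\<bar>x / 2\<bar> / (2 * T)) powr d) \<le> 2 powr d * H (x / 2)"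
        by simp
      also have "\<dots> \<le> H x"
        using doubling[of "x / 2"] False by simp
      finally show ?thesis
        using \<open>T > 0\<close> by (simp add: powr_mult[symmetric] mult.left_commute)
    qed
  qed simp
qed

lemma doubling_power_growth:
  fixes H :: "real \<Rightarrow> real"
  assumes "T > 0" and "r > 1" and "c0 > 0" and "\<And>x. T \<le> \<bar>x\<bar> \<Longrightarrow> c0 \<le> H x"
    and "\<And>t. T \<le> \<bar>t\<bar> \<Longrightarrow> r * H t \<le> H (t * 2)"
  obtains c d where "c > 0" and "d > 0" and "\<And>x. T \<le> \<bar>x\<bar> \<Longrightarrow> c * \<bar>x\<bar> powr d \<le> H x"
proof -
  define d where "d = log 2 r"
  have "d > 0"
    using assms(2) by (simp add: d_def)
  have "c0 * (\<bar>x\<bar> / (2 * T)) powr d \<le> H x" if "T \<le> \<bar>x\<bar>" for x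
    using assms that \<open>d > 0\<close> by (intro doubling_dyadic_growth) (auto simp: d_def)
  moreover have "(\<bar>x\<bar> / (2 * T)) powr d = (2 * T) powr (- d) * \<bar>x\<bar> powr d" for x
    using \<open>T > 0\<close> by (simp add: powr_divide powr_minus_divide)
  ultimately show ?thesis
    using that[of "c0 * (2 * T) powr (- d)" d] \<open>d > 0\<close> assms(1,3) by (simp add: mult.assoc)
qed

lemma integrable_of_inverse_square_bound:
  fixes g :: "real \<Rightarrow> real"
  assumes "g \<in> borel_measurable lborel" and "\<And>x. (1 + x^2) * \<bar>g x\<bar> \<le> B"
  shows "integrable lborel g"
proof (rule Bochner_Integration.integrable_bound)
  show "g \<in> borel_measurable lborel"
    by (fact assms(1))
  have "einterval (-\<infinity>) \<infinity> = (UNIV :: real set)"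
    by (auto simp: einterval_def)
  then show "integrable lborel (\<lambda>x. B * inverse (1 + x^2))"
    using integrable_inverse_1_plus_square by (intro integrable_mult_right) (simp add: set_integrable_def)
  have "norm (g x) \<le> B * inverse (1 + x^2)" for x
  proof -
    have "1 + x^2 > 0"
      by (simp add: add_pos_nonneg)
    then show ?thesis
      using assms(2)[of x] by (simp add: pos_le_divide_eq mult.commute flip: divide_inverse)
  qed
  then show "AE x in lborel. norm (g x) \<le> norm (B * inverse (1 + x^2))"
    by (intro AE_I2) (auto intro: order_trans[OF _ abs_ge_self])
qed

lemma continuous_bounded_if_bounded_outside_interval:
  fixes \<phi> :: "real \<Rightarrow> real"
  assumes "continuous_on UNIV \<phi>" and "\<And>x. R \<le> \<bar>x\<bar> \<Longrightarrow> \<bar>\<phi> x\<bar> \<le> C"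
  obtains B where "\<And>x. \<bar>\<phi> x\<bar> \<le> B"
proof -
  have "compact (\<phi> ` {-R..R})"
    using assms(1) by (intro compact_continuous_image) (auto intro: continuous_on_subset)
  then have "bounded (\<phi> ` {-R..R})"
    by (rule compact_imp_bounded)
  then obtain B where "\<forall>x\<in>{-R..R}. \<bar>\<phi> x\<bar> \<le> B"
    unfolding bounded_iff by auto
  then have "\<bar>\<phi> x\<bar> \<le> max B C" for x
    using assms(2)[of x] by (cases "\<bar>x\<bar> \<le> R") (auto simp: abs_le_iff le_max_iff_disj)
  then show ?thesis
    by (rule that)
qed

lemma integrable_moment_stretched_exp_decay:
  fixes g :: "real \<Rightarrow> real"
  assumes "continuous_on UNIV g" and "c > 0" and "d > 0"
    and decay: "\<And>x. T \<le> \<bar>x\<bar> \<Longrightarrow> \<bar>g x\<bar> \<le> exp (- c * \<bar>x\<bar> powr d)"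
  shows "integrable lborel (\<lambda>x. \<bar>x\<bar>^m * g x)"
proof -
  have "((\<lambda>x. (1 + x^2) * x^m * exp (- c * x powr d)) \<longlongrightarrow> 0) at_top"
    using \<open>c > 0\<close> \<open>d > 0\<close> by real_asymp
  then have "eventually (\<lambda>x. (1 + x^2) * x^m * exp (- c * x powr d) < 1) at_top"
    by (rule order_tendstoD(2)) simp
  then obtain R0 where R0: "\<And>x. x \<ge> R0 \<Longrightarrow> (1 + x^2) * x^m * exp (- c * x powr d) < 1"
    unfolding eventually_at_top_linorder by blast
  have tail: "\<bar>(1 + x^2) * (\<bar>x\<bar>^m * g x)\<bar> \<le> 1" if "max R0 T \<le> \<bar>x\<bar>" for x
  proof -
    have "\<bar>g x\<bar> \<le> exp (- c * \<bar>x\<bar> powr d)"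
      using that by (intro decay) simp
    then have "\<bar>(1 + x^2) * (\<bar>x\<bar>^m * g x)\<bar> \<le> (1 + \<bar>x\<bar>^2) * \<bar>x\<bar>^m * exp (- c * \<bar>x\<bar> powr d)"
      by (simp add: abs_mult mult.assoc mult_left_mono)
    also have "\<dots> \<le> 1"
      using R0[of "\<bar>x\<bar>"] that by (simp add: less_imp_le)
    finally show ?thesis .
  qed
  have "continuous_on UNIV (\<lambda>x. (1 + x^2) * (\<bar>x\<bar>^m * g x))"
    using assms(1) by (intro continuous_intros)
  then obtain B where "\<And>x. \<bar>(1 + x^2) * (\<bar>x\<bar>^m * g x)\<bar> \<le> B"
    using continuous_bounded_if_bounded_outside_interval tail by blast
  then have "(1 + x^2) * \<bar>\<bar>x\<bar>^m * g x\<bar> \<le> B" for x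
    by (simp add: abs_mult)
  moreover have "(\<lambda>x. \<bar>x\<bar>^m * g x) \<in> borel_measurable lborel"
    using assms(1) by (auto intro!: borel_measurable_continuous_onI continuous_intros)
  ultimately show ?thesis
    using integrable_of_inverse_square_bound by blast
qed

lemma regularly_varying_moments:
  fixes f H :: "real \<Rightarrow> real"
  assumes "continuous_on UNIV f" and fH: "\<And>x. f x = exp (- H x)"
    and unimodal_left: "\<And>x y. x \<le> y \<Longrightarrow> y \<le> 0 \<Longrightarrow> f x \<le> f y"
    and unimodal_right: "\<And>x y. 0 \<le> x \<Longrightarrow> x \<le> y \<Longrightarrow> f y \<le> f x"
    and regvar: "\<exists>\<alpha>>0. \<forall>x>0. ((\<lambda>t. H (t * x) / H t) \<longlongrightarrow> x powr \<alpha>) at_infinity"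
  shows "integrable lborel (\<lambda>x. \<bar>x\<bar>^m * f x)"
proof -
  have mono_right: "H x \<le> H y" if "0 \<le> x" "x \<le> y" for x y
    using unimodal_right[OF that] by (simp add: fH)
  have mono_left: "H x \<le> H y" if "y \<le> x" "x \<le> 0" for x y
    using unimodal_left[OF that] by (simp add: fH)
  have doubling_mono: "H t \<le> H (t * 2)" for t
    using mono_right[where x=t and y="t * 2"] mono_left[where x=t and y="t * 2"] by (cases "t \<ge> 0") auto
  obtain \<alpha> where "\<alpha> > 0" and lim: "((\<lambda>t. H (t * 2) / H t) \<longlongrightarrow> 2 powr \<alpha>) at_infinity"
    using regvar by force
  obtain T r where "T > 0" "r > 1" and doubling: "\<And>t. T \<le> \<bar>t\<bar> \<Longrightarrow> H t > 0 \<and> r * H t \<le> H (t * 2)"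
    using regularly_varying_doubling[where H=H, OF lim \<open>\<alpha> > 0\<close> doubling_mono] by blast
  define c0 where "c0 = min (H T) (H (- T))"
  have "c0 > 0"
    using doubling[of T] doubling[of "- T"] \<open>T > 0\<close> by (simp add: c0_def)
  have "c0 \<le> H x" if "T \<le> \<bar>x\<bar>" for x
    using that \<open>T > 0\<close> mono_right[where x=T and y=x] mono_left[where x="- T" and y=x]
    by (cases "x \<ge> 0") (auto simp: c0_def min_le_iff_disj)
  then obtain c d where "c > 0" "d > 0" and growth: "\<And>x. T \<le> \<bar>x\<bar> \<Longrightarrow> c * \<bar>x\<bar> powr d \<le> H x"
    using doubling_power_growth[where H=H, OF \<open>T > 0\<close> \<open>r > 1\<close> \<open>c0 > 0\<close>] doubling by blast
  have "\<bar>f x\<bar> \<le> exp (- c * \<bar>x\<bar> powr d)" if "T \<le> \<bar>x\<bar>" for x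
    using growth[OF that] by (simp add: fH)
  then show ?thesis
    using integrable_moment_stretched_exp_decay[OF assms(1) \<open>c > 0\<close> \<open>d > 0\<close>] by blast
qed

section \<open>Laplace's method\<close>

lemma gaussian_abs_moment:
  fixes \<kappa> :: real
  assumes "\<kappa> > 0"
  shows "integrable lborel (\<lambda>x. \<bar>x\<bar>^m * exp (- \<kappa> * x^2))"
    and "(\<integral>x. \<bar>x\<bar>^m * exp (- \<kappa> * x^2) \<partial>lborel) =
           (2 * \<kappa>) powr (- (real m + 1) / 2) * (\<integral>y. \<bar>y\<bar>^m * exp (- (y^2) / 2) \<partial>lborel)"
proof -
  define s where "s = (2 * \<kappa>) powr (- 1 / 2)"
  have "s > 0"
    using assms by (simp add: s_def)
  have "\<kappa> * s^2 = 1 / 2"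
    using assms by (simp add: s_def powr_power powr_neg_one)
  then have rescale: "(\<lambda>y. \<bar>s * y\<bar>^m * exp (- \<kappa> * (s * y)^2)) = (\<lambda>y. s ^ m * (\<bar>y\<bar>^m * exp (- (y^2) / 2)))"
    using \<open>s > 0\<close> by (simp add: fun_eq_iff abs_mult power_mult_distrib mult.assoc[symmetric])
  have "integrable lborel (\<lambda>y. sqrt (2 * pi) * (std_normal_density y * \<bar>y\<bar>^m))"
    by (intro integrable_mult_right integrable_std_normal_moment_abs)
  then have "integrable lborel (\<lambda>y::real. \<bar>y\<bar>^m * exp (- (y^2) / 2))"
    by (simp add: std_normal_density_def mult_ac)
  then have "integrable lborel (\<lambda>y. \<bar>s * y\<bar>^m * exp (- \<kappa> * (s * y)^2))"
    unfolding rescale by (rule integrable_mult_right)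
  then show "integrable lborel (\<lambda>x. \<bar>x\<bar>^m * exp (- \<kappa> * x^2))"
    using lborel_integrable_real_affine_iff[where c=s and t=0 and f="\<lambda>x. \<bar>x\<bar>^m * exp (- \<kappa> * x^2)"] \<open>s > 0\<close>
    by simp
  have "s * s ^ m = (2 * \<kappa>) powr (real (Suc m) * (- 1 / 2))"
    unfolding s_def power_Suc[symmetric] using assms by (intro powr_power) simp
  also have "real (Suc m) * (- 1 / 2) = - (real m + 1) / 2"
    by (simp add: field_simps)
  finally have scale: "s * s ^ m = (2 * \<kappa>) powr (- (real m + 1) / 2)" .
  have "(\<integral>x. \<bar>x\<bar>^m * exp (- \<kappa> * x^2) \<partial>lborel)
      = s * (\<integral>y. \<bar>s * y\<bar>^m * exp (- \<kappa> * (s * y)^2) \<partial>lborel)"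
    using lborel_integral_real_affine[of s "\<lambda>x. \<bar>x\<bar>^m * exp (- \<kappa> * x^2)" 0] \<open>s > 0\<close> by simp
  also have "\<dots> = (s * s ^ m) * (\<integral>y. \<bar>y\<bar>^m * exp (- (y^2) / 2) \<partial>lborel)"
    unfolding rescale by simp
  finally show "(\<integral>x. \<bar>x\<bar>^m * exp (- \<kappa> * x^2) \<partial>lborel) =
      (2 * \<kappa>) powr (- (real m + 1) / 2) * (\<integral>y. \<bar>y\<bar>^m * exp (- (y^2) / 2) \<partial>lborel)"
    unfolding scale .
qed

lemma powr_bigo_mono: "a \<le> b \<Longrightarrow> (\<lambda>x::real. x powr a) \<in> O[at_top](\<lambda>x. x powr b)"
  by (intro landau_o.big_mono eventually_mono[OF eventually_ge_at_top[of 1]]) (auto intro: powr_mono)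

(* Applied below with U = log f - log f(0), for which weight beta is f^beta up to a constant factor. *)
locale laplace_peak =
  fixes U :: "real \<Rightarrow> real" and K c \<delta> \<eta> :: real
  assumes continuous_U: "continuous_on UNIV U"
    and quadratic_lower: "\<And>x. \<bar>x\<bar> \<le> 1 \<Longrightarrow> - K * x^2 \<le> U x"
    and quadratic_upper: "\<And>x. \<bar>x\<bar> \<le> \<delta> \<Longrightarrow> U x \<le> - c * x^2"
    and gap: "\<And>x. \<delta> \<le> \<bar>x\<bar> \<Longrightarrow> U x \<le> - \<eta>"
    and c_pos: "c > 0" and \<eta>_pos: "\<eta> > 0"
    and moments_integrable: "\<And>m. integrable lborel (\<lambda>x. \<bar>x\<bar>^m * exp (U x))"
begin

definition weight :: "real \<Rightarrow> real \<Rightarrow> real" where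
  "weight \<beta> x = exp (\<beta> * U x)"

lemma weight_pos: "weight \<beta> x > 0"
  by (simp add: weight_def)

lemma U_nonpos: "U x \<le> 0"
  using quadratic_upper[of x] gap[of x] c_pos \<eta>_pos
  by (cases "\<bar>x\<bar> \<le> \<delta>") (auto intro: order_trans[of _ "- c * x^2"] simp: mult_nonneg_nonneg)

lemma weight_le_exp: "\<beta> \<ge> 1 \<Longrightarrow> weight \<beta> x \<le> exp (U x)"
  using mult_right_mono_neg[OF _ U_nonpos, of 1 \<beta> x] by (simp add: weight_def)

lemma weight_le:
  assumes "\<beta> \<ge> 1"
  shows "weight \<beta> x \<le> exp (- (\<beta> * c) * x^2) + exp (- (\<beta> - 1) * \<eta>) * exp (U x)"
proof (cases "\<bar>x\<bar> \<le> \<delta>")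
  case True
  then have "\<beta> * U x \<le> - (\<beta> * c) * x^2"
    using quadratic_upper[of x] assms by (auto dest: mult_left_mono[of _ _ \<beta>])
  then show ?thesis
    by (simp add: weight_def add_increasing2)
next
  case False
  then have "\<beta> * U x \<le> - (\<beta> - 1) * \<eta> + U x"
    using gap[of x] assms mult_left_mono[of "U x" "- \<eta>" "\<beta> - 1"] by (auto simp: algebra_simps)
  then show ?thesis
    by (simp add: weight_def add_increasing flip: exp_add)
qed

lemma integrable_weight:
  assumes "\<beta> \<ge> 1" and "continuous_on UNIV \<phi>" and "power_bounded p q \<phi>"
  shows "integrable lborel (\<lambda>x. \<phi> x * weight \<beta> x)"
proof -
  obtain C where C: "\<And>x. \<bar>\<phi> x\<bar> \<le> C * (\<bar>x\<bar> ^ p + \<bar>x\<bar> ^ q)"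
    using assms(3) by (auto simp: power_bounded_def)
  show ?thesis
  proof (rule Bochner_Integration.integrable_bound)
    show "integrable lborel (\<lambda>x. C * (\<bar>x\<bar> ^ p * exp (U x) + \<bar>x\<bar> ^ q * exp (U x)))"
      by (intro integrable_mult_right Bochner_Integration.integrable_add moments_integrable)
    show "(\<lambda>x. \<phi> x * weight \<beta> x) \<in> borel_measurable lborel"
      unfolding weight_def using assms(2) continuous_U
      by (auto intro!: borel_measurable_continuous_onI continuous_intros)
    have "\<bar>\<phi> x\<bar> * weight \<beta> x \<le> C * (\<bar>x\<bar> ^ p + \<bar>x\<bar> ^ q) * exp (U x)" for x
      using C[of x] weight_le_exp[OF assms(1), of x] weight_pos[of \<beta> x]
      by (intro mult_mono) (auto intro: order_trans[OF abs_ge_zero])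
    then have "norm (\<phi> x * weight \<beta> x) \<le> C * (\<bar>x\<bar> ^ p * exp (U x) + \<bar>x\<bar> ^ q * exp (U x))" for x
      by (simp add: abs_mult algebra_simps weight_pos less_imp_le)
    then show "AE x in lborel. norm (\<phi> x * weight \<beta> x) \<le> norm (C * (\<bar>x\<bar> ^ p * exp (U x) + \<bar>x\<bar> ^ q * exp (U x)))"
      by (intro AE_I2) (auto intro: order_trans[OF _ abs_ge_self])
  qed
qed

lemma integral_weight_lower:
  assumes "\<beta> \<ge> 1"
  shows "2 * exp (- \<bar>K\<bar>) / sqrt \<beta> \<le> (\<integral>x. weight \<beta> x \<partial>lborel)"
proof -
  define s where "s = 1 / sqrt \<beta>"
  have "s > 0" "s \<le> 1"
    using assms by (auto simp: s_def)
  have "exp (- \<bar>K\<bar>) * indicator {-s..s} x \<le> weight \<beta> x" for x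
  proof (cases "x \<in> {-s..s}")
    case True
    then have "\<bar>x\<bar> * sqrt \<beta> \<le> 1"
      using assms by (auto simp: s_def field_simps)
    then have "(\<bar>x\<bar> * sqrt \<beta>)^2 \<le> 1"
      using assms by (intro power_le_one) auto
    then have "\<beta> * x^2 \<le> 1"
      using assms by (simp add: power_mult_distrib mult.commute)
    have "- K * x^2 \<le> U x"
      using True \<open>s \<le> 1\<close> by (intro quadratic_lower) auto
    have "- \<bar>K\<bar> \<le> - \<bar>K\<bar> * (\<beta> * x^2)"
      using mult_left_le[OF \<open>\<beta> * x^2 \<le> 1\<close>, of "\<bar>K\<bar>"] by simp
    also have "\<dots> \<le> - K * (\<beta> * x^2)"
      using assms by (intro mult_right_mono) auto
    also have "\<dots> \<le> \<beta> * U x"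
      using mult_left_mono[OF \<open>- K * x^2 \<le> U x\<close>, of \<beta>] assms by (simp add: algebra_simps)
    finally have "- \<bar>K\<bar> \<le> \<beta> * U x" .
    then show ?thesis
      using True by (simp add: weight_def)
  qed (simp add: weight_pos less_imp_le)
  then have "(\<integral>x. exp (- \<bar>K\<bar>) * indicator {-s..s} x \<partial>lborel) \<le> (\<integral>x. weight \<beta> x \<partial>lborel)"
    using integrable_weight[OF assms, of "\<lambda>_. 1" 0 0] power_bounded_const[of 1] \<open>s > 0\<close>
    by (intro integral_mono) (auto simp: emeasure_lborel_Icc)
  moreover have "(\<integral>x. exp (- \<bar>K\<bar>) * indicator {-s..s} x \<partial>lborel) = 2 * exp (- \<bar>K\<bar>) / sqrt \<beta>"
    using \<open>s > 0\<close> by (simp add: s_def)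
  ultimately show ?thesis
    by simp
qed

lemma integral_weight_pos: "\<beta> \<ge> 1 \<Longrightarrow> (\<integral>x. weight \<beta> x \<partial>lborel) > 0"
  using integral_weight_lower[of \<beta>] by (rule order.strict_trans2[rotated]) auto

lemma integrable_moment_weight: "\<beta> \<ge> 1 \<Longrightarrow> integrable lborel (\<lambda>x. \<bar>x\<bar>^m * weight \<beta> x)"
  by (rule integrable_weight[OF _ _ power_bounded_abs_power[of m m m]]) (auto intro!: continuous_intros)

lemma moment_integral_le:
  assumes "\<beta> \<ge> 1"
  shows "(\<integral>x. \<bar>x\<bar>^m * weight \<beta> x \<partial>lborel)
    \<le> (2 * (\<beta> * c)) powr (- (real m + 1) / 2) * (\<integral>y. \<bar>y\<bar>^m * exp (- ((y::real)^2) / 2) \<partial>lborel)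
      + exp (- (\<beta> - 1) * \<eta>) * (\<integral>x. \<bar>x\<bar>^m * exp (U x) \<partial>lborel)"
proof -
  have "\<beta> * c > 0"
    using assms c_pos by simp
  have "(\<integral>x. \<bar>x\<bar>^m * weight \<beta> x \<partial>lborel)
      \<le> (\<integral>x. \<bar>x\<bar>^m * exp (- (\<beta> * c) * x^2) + exp (- (\<beta> - 1) * \<eta>) * (\<bar>x\<bar>^m * exp (U x)) \<partial>lborel)"
  proof (rule integral_mono[OF integrable_moment_weight[OF assms]])
    show "integrable lborel (\<lambda>x. \<bar>x\<bar>^m * exp (- (\<beta> * c) * x^2)
        + exp (- (\<beta> - 1) * \<eta>) * (\<bar>x\<bar>^m * exp (U x)))"
      using gaussian_abs_moment(1)[OF \<open>\<beta> * c > 0\<close>] moments_integrable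
      by (intro Bochner_Integration.integrable_add integrable_mult_right)
    show "\<bar>x\<bar>^m * weight \<beta> x \<le> \<bar>x\<bar>^m * exp (- (\<beta> * c) * x^2)
        + exp (- (\<beta> - 1) * \<eta>) * (\<bar>x\<bar>^m * exp (U x))" for x
      using mult_left_mono[OF weight_le[OF assms, of x], of "\<bar>x\<bar>^m"]
      by (simp add: distrib_left mult_ac)
  qed
  also have "\<dots> = (2 * (\<beta> * c)) powr (- (real m + 1) / 2) * (\<integral>y. \<bar>y\<bar>^m * exp (- (y^2) / 2) \<partial>lborel)
      + exp (- (\<beta> - 1) * \<eta>) * (\<integral>x. \<bar>x\<bar>^m * exp (U x) \<partial>lborel)"
    using gaussian_abs_moment[OF \<open>\<beta> * c > 0\<close>] moments_integrable by simp
  finally show ?thesis .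
qed

lemma moment_integral_bigo:
  "(\<lambda>\<beta>. \<integral>x. \<bar>x\<bar>^m * weight \<beta> x \<partial>lborel) \<in> O[at_top](\<lambda>\<beta>. \<beta> powr (- (real m + 1) / 2))"
proof -
  define e where "e = - (real m + 1) / 2"
  define G where "G = (\<integral>y. \<bar>y\<bar>^m * exp (- ((y::real)^2) / 2) \<partial>lborel)"
  define T where "T = (\<integral>x. \<bar>x\<bar>^m * exp (U x) \<partial>lborel)"
  have "norm (\<integral>x. \<bar>x\<bar>^m * weight \<beta> x \<partial>lborel)
      \<le> norm ((2 * c) powr e * G * \<beta> powr e + T * exp (- (\<beta> - 1) * \<eta>))" if "\<beta> \<ge> 1" for \<beta>
  proof -
    have "0 \<le> (\<integral>x. \<bar>x\<bar>^m * weight \<beta> x \<partial>lborel)"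
      by (intro integral_nonneg_AE) (auto simp: weight_pos less_imp_le)
    moreover have "(2 * (\<beta> * c)) powr e = (2 * c) powr e * \<beta> powr e"
      using that c_pos by (simp add: powr_mult[symmetric] mult_ac)
    ultimately show ?thesis
      using moment_integral_le[OF that, of m] by (simp add: G_def T_def e_def mult_ac)
  qed
  then have "(\<lambda>\<beta>. \<integral>x. \<bar>x\<bar>^m * weight \<beta> x \<partial>lborel)
      \<in> O[at_top](\<lambda>\<beta>. (2 * c) powr e * G * \<beta> powr e + T * exp (- (\<beta> - 1) * \<eta>))"
    by (intro landau_o.big_mono eventually_mono[OF eventually_ge_at_top[of 1]])
  also have "(\<lambda>\<beta>. (2 * c) powr e * G * \<beta> powr e + T * exp (- (\<beta> - 1) * \<eta>)) \<in> O[at_top](\<lambda>\<beta>. \<beta> powr e)"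
  proof (intro sum_in_bigo)
    have "(\<lambda>\<beta>. exp (- (\<beta> - 1) * \<eta>)) \<in> O[at_top](\<lambda>\<beta>. \<beta> powr e)"
      using \<eta>_pos by real_asymp
    then show "(\<lambda>\<beta>. T * exp (- (\<beta> - 1) * \<eta>)) \<in> O[at_top](\<lambda>\<beta>. \<beta> powr e)"
      by simp
  qed simp
  finally show ?thesis
    by (simp add: e_def)
qed

lemma inverse_integral_weight_bigo:
  "(\<lambda>\<beta>. 1 / (\<integral>x. weight \<beta> x \<partial>lborel)) \<in> O[at_top](\<lambda>\<beta>. \<beta> powr (1 / 2))"
proof (intro landau_o.bigI eventually_mono[OF eventually_ge_at_top[of 1]])
  show "exp \<bar>K\<bar> / 2 > 0"
    by simp
  fix \<beta> :: real
  assume "\<beta> \<ge> 1"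
  have "2 * exp (- \<bar>K\<bar>) / sqrt \<beta> > 0"
    using \<open>\<beta> \<ge> 1\<close> by simp
  then have "1 / (\<integral>x. weight \<beta> x \<partial>lborel) \<le> 1 / (2 * exp (- \<bar>K\<bar>) / sqrt \<beta>)"
    using integral_weight_lower[OF \<open>\<beta> \<ge> 1\<close>] integral_weight_pos[OF \<open>\<beta> \<ge> 1\<close>]
    by (intro divide_left_mono mult_pos_pos) auto
  also have "\<dots> = exp \<bar>K\<bar> / 2 * \<beta> powr (1 / 2)"
    using \<open>\<beta> \<ge> 1\<close> by (simp add: powr_half_sqrt exp_minus field_simps)
  finally show "norm (1 / (\<integral>x. weight \<beta> x \<partial>lborel)) \<le> exp \<bar>K\<bar> / 2 * norm (\<beta> powr (1 / 2))"
    using integral_weight_pos[OF \<open>\<beta> \<ge> 1\<close>] by simp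
qed

lemma moment_bigo:
  "(\<lambda>\<beta>. wmean (weight \<beta>) (\<lambda>x. \<bar>x\<bar>^m)) \<in> O[at_top](\<lambda>\<beta>. \<beta> powr (- real m / 2))"
proof -
  have "(\<lambda>\<beta>. (\<integral>x. \<bar>x\<bar>^m * weight \<beta> x \<partial>lborel) * (1 / (\<integral>x. weight \<beta> x \<partial>lborel)))
      \<in> O[at_top](\<lambda>\<beta>. \<beta> powr (- (real m + 1) / 2) * \<beta> powr (1 / 2))"
    by (rule landau_o.big.mult[OF moment_integral_bigo inverse_integral_weight_bigo])
  moreover have "\<beta> powr (- (real m + 1) / 2) * \<beta> powr (1 / 2) = \<beta> powr (- real m / 2)" for \<beta> :: real
  proof -
    have "- (real m + 1) / 2 + 1 / 2 = - real m / 2"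
      by (simp add: field_simps)
    then show ?thesis
      by (metis powr_add)
  qed
  ultimately show ?thesis
    by (simp add: wmean_def)
qed

lemma wmean_abs_bigo:
  assumes "power_bounded p q \<phi>" and "p \<le> q" and "continuous_on UNIV \<phi>"
  shows "(\<lambda>\<beta>. wmean (weight \<beta>) (\<lambda>x. \<bar>\<phi> x\<bar>)) \<in> O[at_top](\<lambda>\<beta>. \<beta> powr (- real p / 2))"
proof -
  obtain C where C: "\<And>x. \<bar>\<phi> x\<bar> \<le> C * (\<bar>x\<bar> ^ p + \<bar>x\<bar> ^ q)"
    using assms(1) by (auto simp: power_bounded_def)
  have "norm (wmean (weight \<beta>) (\<lambda>x. \<bar>\<phi> x\<bar>))
      \<le> norm (C * (wmean (weight \<beta>) (\<lambda>x. \<bar>x\<bar> ^ p) + wmean (weight \<beta>) (\<lambda>x. \<bar>x\<bar> ^ q)))"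
    if "\<beta> \<ge> 1" for \<beta>
  proof -
    have pb: "power_bounded p q (\<lambda>x. \<bar>x\<bar> ^ p)" "power_bounded p q (\<lambda>x. \<bar>x\<bar> ^ q)"
      using assms(2) by (auto intro: power_bounded_abs_power)
    have int_p: "integrable lborel (\<lambda>x. \<bar>x\<bar> ^ p * weight \<beta> x)"
      by (rule integrable_weight[OF \<open>\<beta> \<ge> 1\<close> _ pb(1)]) (intro continuous_intros)
    have int_q: "integrable lborel (\<lambda>x. \<bar>x\<bar> ^ q * weight \<beta> x)"
      by (rule integrable_weight[OF \<open>\<beta> \<ge> 1\<close> _ pb(2)]) (intro continuous_intros)
    have "power_bounded p q (\<lambda>x. \<bar>\<phi> x\<bar>)"
      using C by (intro power_boundedI) simp
    then have int_\<phi>: "integrable lborel (\<lambda>x. \<bar>\<phi> x\<bar> * weight \<beta> x)"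
      using assms(3) by (intro integrable_weight[OF \<open>\<beta> \<ge> 1\<close>] continuous_intros)
    have "wmean (weight \<beta>) (\<lambda>x. \<bar>\<phi> x\<bar>) \<le> wmean (weight \<beta>) (\<lambda>x. C * (\<bar>x\<bar> ^ p + \<bar>x\<bar> ^ q))"
    proof (rule wmean_mono[OF int_\<phi>])
      show "integrable lborel (\<lambda>x. C * (\<bar>x\<bar> ^ p + \<bar>x\<bar> ^ q) * weight \<beta> x)"
        using int_p int_q by (simp add: algebra_simps)
    qed (use C integral_weight_pos[OF \<open>\<beta> \<ge> 1\<close>] in \<open>auto simp: weight_pos less_imp_le\<close>)
    also have "\<dots> = C * (wmean (weight \<beta>) (\<lambda>x. \<bar>x\<bar> ^ p) + wmean (weight \<beta>) (\<lambda>x. \<bar>x\<bar> ^ q))"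
      using int_p int_q by (simp add: wmean_cmult wmean_add)
    finally show ?thesis
      using wmean_nonneg[of "weight \<beta>" "\<lambda>x. \<bar>\<phi> x\<bar>"] by (simp add: weight_pos less_imp_le)
  qed
  then have "(\<lambda>\<beta>. wmean (weight \<beta>) (\<lambda>x. \<bar>\<phi> x\<bar>)) \<in>
      O[at_top](\<lambda>\<beta>. C * (wmean (weight \<beta>) (\<lambda>x. \<bar>x\<bar> ^ p) + wmean (weight \<beta>) (\<lambda>x. \<bar>x\<bar> ^ q)))"
    by (intro landau_o.big_mono eventually_mono[OF eventually_ge_at_top[of 1]])
  also have "(\<lambda>\<beta>. C * (wmean (weight \<beta>) (\<lambda>x. \<bar>x\<bar> ^ p) + wmean (weight \<beta>) (\<lambda>x. \<bar>x\<bar> ^ q)))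
      \<in> O[at_top](\<lambda>\<beta>. \<beta> powr (- real p / 2))"
    using moment_bigo[of p] landau_o.big_trans[OF moment_bigo[of q] powr_bigo_mono] assms(2)
    by (auto intro!: sum_in_bigo)
  finally show ?thesis .
qed

lemma wcov_bigo:
  assumes "power_bounded p q \<phi>" and "power_bounded p' q' \<psi>" and "p \<le> q" and "p' \<le> q'"
    and "continuous_on UNIV \<phi>" and "continuous_on UNIV \<psi>"
  shows "(\<lambda>\<beta>. wcov (weight \<beta>) \<phi> \<psi>) \<in> O[at_top](\<lambda>\<beta>. \<beta> powr (- real (p + p') / 2))"
proof -
  have pb: "power_bounded (p + p') (q + q') (\<lambda>x. \<phi> x * \<psi> x)"
    using assms(1-4) by (rule power_bounded_mult)
  have cont: "continuous_on UNIV (\<lambda>x. \<phi> x * \<psi> x)"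
    using assms(5,6) by (intro continuous_intros)
  have "norm (wcov (weight \<beta>) \<phi> \<psi>) \<le> norm (wmean (weight \<beta>) (\<lambda>x. \<bar>\<phi> x * \<psi> x\<bar>)
      + wmean (weight \<beta>) (\<lambda>x. \<bar>\<phi> x\<bar>) * wmean (weight \<beta>) (\<lambda>x. \<bar>\<psi> x\<bar>))" if "\<beta> \<ge> 1" for \<beta>
  proof -
    have "\<bar>wcov (weight \<beta>) \<phi> \<psi>\<bar> \<le> wmean (weight \<beta>) (\<lambda>x. \<bar>\<phi> x * \<psi> x\<bar>)
        + wmean (weight \<beta>) (\<lambda>x. \<bar>\<phi> x\<bar>) * wmean (weight \<beta>) (\<lambda>x. \<bar>\<psi> x\<bar>)"
      using that assms pb cont
      by (intro abs_wcov_le integrable_weight integral_weight_pos) (auto simp: weight_pos less_imp_le)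
    then show ?thesis
      by simp
  qed
  then have "(\<lambda>\<beta>. wcov (weight \<beta>) \<phi> \<psi>) \<in> O[at_top](\<lambda>\<beta>. wmean (weight \<beta>) (\<lambda>x. \<bar>\<phi> x * \<psi> x\<bar>)
      + wmean (weight \<beta>) (\<lambda>x. \<bar>\<phi> x\<bar>) * wmean (weight \<beta>) (\<lambda>x. \<bar>\<psi> x\<bar>))"
    by (intro landau_o.big_mono eventually_mono[OF eventually_ge_at_top[of 1]])
  also have "(\<lambda>\<beta>. wmean (weight \<beta>) (\<lambda>x. \<bar>\<phi> x * \<psi> x\<bar>)
      + wmean (weight \<beta>) (\<lambda>x. \<bar>\<phi> x\<bar>) * wmean (weight \<beta>) (\<lambda>x. \<bar>\<psi> x\<bar>))
      \<in> O[at_top](\<lambda>\<beta>. \<beta> powr (- real (p + p') / 2))"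
  proof (rule sum_in_bigo)
    show "(\<lambda>\<beta>. wmean (weight \<beta>) (\<lambda>x. \<bar>\<phi> x * \<psi> x\<bar>)) \<in> O[at_top](\<lambda>\<beta>. \<beta> powr (- real (p + p') / 2))"
      using wmean_abs_bigo[OF pb _ cont] assms(3,4) by simp
    have exponent: "\<beta> powr (- real p / 2) * \<beta> powr (- real p' / 2) = \<beta> powr (- real (p + p') / 2)"
      for \<beta> :: real
    proof -
      have "- real p / 2 + - real p' / 2 = - real (p + p') / 2"
        by (simp add: field_simps)
      then show ?thesis
        by (metis powr_add)
    qed
    have "(\<lambda>\<beta>. wmean (weight \<beta>) (\<lambda>x. \<bar>\<phi> x\<bar>) * wmean (weight \<beta>) (\<lambda>x. \<bar>\<psi> x\<bar>))
        \<in> O[at_top](\<lambda>\<beta>. \<beta> powr (- real p / 2) * \<beta> powr (- real p' / 2))"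
      using assms by (intro landau_o.big.mult wmean_abs_bigo)
    then show "(\<lambda>\<beta>. wmean (weight \<beta>) (\<lambda>x. \<bar>\<phi> x\<bar>) * wmean (weight \<beta>) (\<lambda>x. \<bar>\<psi> x\<bar>))
        \<in> O[at_top](\<lambda>\<beta>. \<beta> powr (- real (p + p') / 2))"
      unfolding exponent .
  qed
  finally show ?thesis .
qed

end

lemma cubic_remainder_near_0:
  fixes U :: "real \<Rightarrow> real"
  assumes taylor: "\<And>x. \<bar>U x - a / 2 * x^2 - b / 6 * x^3\<bar> \<le> M / 24 * x^4" and "\<bar>x\<bar> \<le> 1"
  shows "\<bar>U x - a / 2 * x^2\<bar> \<le> (\<bar>b\<bar> / 6 + M / 24) * \<bar>x\<bar>^3"
proof -
  have "M \<ge> 0"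
    using order_trans[OF abs_ge_zero taylor[of 1]] by simp
  have "x^4 \<le> \<bar>x\<bar>^3"
    using mult_right_mono[OF assms(2), of "\<bar>x\<bar>^3"] by (simp add: power_abs[symmetric] eval_nat_numeral)
  then have "M / 24 * x^4 \<le> M / 24 * \<bar>x\<bar>^3"
    using \<open>M \<ge> 0\<close> by (intro mult_left_mono) auto
  moreover have "\<bar>b / 6 * x^3\<bar> = \<bar>b\<bar> / 6 * \<bar>x\<bar>^3"
    by (simp add: abs_mult power_abs)
  ultimately show ?thesis
    using taylor[of x] abs_triangle_ineq[of "b / 6 * x^3" "U x - a / 2 * x^2 - b / 6 * x^3"]
    by (simp add: algebra_simps)
qed

lemma unimodal_gap:
  fixes U :: "real \<Rightarrow> real"
  assumes "\<And>x y. x \<le> y \<Longrightarrow> y \<le> 0 \<Longrightarrow> U x \<le> U y" and "\<And>x y. 0 \<le> x \<Longrightarrow> x \<le> y \<Longrightarrow> U y \<le> U x"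
    and "\<delta> > 0" and near: "\<And>x. \<bar>x\<bar> \<le> \<delta> \<Longrightarrow> U x \<le> - c * x^2" and "\<delta> \<le> \<bar>x\<bar>"
  shows "U x \<le> - (c * \<delta>^2)"
proof (cases "x \<ge> 0")
  case True
  then have "U x \<le> U \<delta>"
    using assms(3,5) by (intro assms(2)) auto
  then show ?thesis
    using near[of \<delta>] \<open>\<delta> > 0\<close> by simp
next
  case False
  then have "U x \<le> U (- \<delta>)"
    using assms(3,5) by (intro assms(1)) auto
  then show ?thesis
    using near[of "- \<delta>"] \<open>\<delta> > 0\<close> by simp
qed

lemma laplace_peak_of_taylor:
  fixes U :: "real \<Rightarrow> real"
  assumes "continuous_on UNIV U" and "a < 0"
    and taylor: "\<And>x. \<bar>U x - a / 2 * x^2 - b / 6 * x^3\<bar> \<le> M / 24 * x^4"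
    and mono_left: "\<And>x y. x \<le> y \<Longrightarrow> y \<le> 0 \<Longrightarrow> U x \<le> U y"
    and mono_right: "\<And>x y. 0 \<le> x \<Longrightarrow> x \<le> y \<Longrightarrow> U y \<le> U x"
    and "\<And>m. integrable lborel (\<lambda>x. \<bar>x\<bar>^m * exp (U x))"
  obtains K c \<delta> \<eta> where "laplace_peak U K c \<delta> \<eta>"
proof -
  define L where "L = \<bar>b\<bar> / 6 + M / 24"
  define c where "c = - a / 4"
  define \<delta> where "\<delta> = min 1 (c / (L + 1))"
  note cubic = cubic_remainder_near_0[OF taylor, folded L_def]
  have "L \<ge> 0" "c > 0"
    using order_trans[OF abs_ge_zero taylor[of 1]] \<open>a < 0\<close> by (auto simp: L_def c_def)
  then have "\<delta> > 0" "\<delta> \<le> 1" "L * \<delta> \<le> c"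
    by (auto simp: \<delta>_def min_def field_simps intro: order_trans[of _ "(L + 1) * \<delta>"])
  have "\<bar>x\<bar>^3 \<le> x^2" if "\<bar>x\<bar> \<le> 1" for x :: real
    using mult_right_mono[OF that, of "x^2"] by (simp add: power_abs[symmetric] eval_nat_numeral)
  then have lower: "- (L - a / 2) * x^2 \<le> U x" if "\<bar>x\<bar> \<le> 1" for x
    using cubic[OF that] that mult_left_mono[of "\<bar>x\<bar>^3" "x^2" L] \<open>L \<ge> 0\<close>
    by (auto simp: algebra_simps abs_le_iff)
  have upper: "U x \<le> - c * x^2" if "\<bar>x\<bar> \<le> \<delta>" for x
  proof -
    have "L * \<bar>x\<bar>^3 = (L * \<bar>x\<bar>) * x^2"
      by (simp add: power_abs[symmetric] eval_nat_numeral mult_ac)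
    also have "\<dots> \<le> c * x^2"
      using that \<open>L \<ge> 0\<close> \<open>L * \<delta> \<le> c\<close> mult_left_mono[OF that \<open>L \<ge> 0\<close>]
      by (intro mult_right_mono) auto
    finally show ?thesis
      using cubic[of x] that \<open>\<delta> \<le> 1\<close> by (simp add: c_def abs_le_iff algebra_simps)
  qed
  have "laplace_peak U (L - a / 2) c \<delta> (c * \<delta>^2)"
    using assms(1,6) lower upper unimodal_gap[OF mono_left mono_right \<open>\<delta> > 0\<close> upper] \<open>c > 0\<close> \<open>\<delta> > 0\<close>
    by unfold_locales auto
  then show ?thesis
    by (rule that)
qed

section \<open>The tilted log-density\<close>

lemma tilt_eq_exp:
  "(\<And>x. f x > 0) \<Longrightarrow> tilt f \<beta> = (\<lambda>x. exp (\<beta> * c) * exp (\<beta> * (hfun f x - c)))"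
  by (simp add: fun_eq_iff tilt_def powr_def hfun_def less_imp_neq[symmetric] algebra_simps
    flip: exp_add)

lemma hfun_mono: "(\<And>x. f x > 0) \<Longrightarrow> f x \<le> f y \<Longrightarrow> hfun f x \<le> hfun f y"
  by (simp add: hfun_def)

lemma hfun_le_at_mode:
  assumes "\<And>x. f x > 0"
    and "\<And>x y. x \<le> y \<Longrightarrow> y \<le> 0 \<Longrightarrow> f x \<le> f y" and "\<And>x y. 0 \<le> x \<Longrightarrow> x \<le> y \<Longrightarrow> f y \<le> f x"
  shows "hfun f x \<le> hfun f 0"
  using hfun_mono[OF assms(1) assms(2)[of x 0]] hfun_mono[OF assms(1) assms(3)[of 0 x]]
  by (cases "x \<le> 0") auto

lemma higher_differentiable_hfun:
  "(\<And>x. f x > 0) \<Longrightarrow> higher_differentiable (Suc n) f \<Longrightarrow> higher_differentiable (Suc n) (hfun f)"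
  using higher_differentiable_ln by (simp add: hfun_def)

lemma continuous_hfun_kfun:
  assumes "\<And>x. f x > 0" and "higher_differentiable 2 f"
  shows "continuous_on UNIV (hfun f)" and "continuous_on UNIV (kfun f)"
proof -
  have hd: "higher_differentiable (Suc (Suc 0)) (hfun f)"
    using assms by (intro higher_differentiable_hfun) (simp_all add: numeral_2_eq_2)
  then have "continuous_on UNIV (hfun f)"
    by (rule higher_differentiable_continuous)
  moreover have "continuous_on UNIV (deriv (hfun f))"
    using hd by (intro higher_differentiable_continuous[of 0]) (simp add: higher_differentiable_Suc)
  ultimately show "continuous_on UNIV (hfun f)" "continuous_on UNIV (kfun f)"
    unfolding kfun_def by (auto intro: continuous_intros)
qed

lemma hfun_expansions:
  assumes pos: "\<And>x. f x > 0" and "higher_differentiable 4 f"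
    and "\<And>x y. x \<le> y \<Longrightarrow> y \<le> 0 \<Longrightarrow> f x \<le> f y" and "\<And>x y. 0 \<le> x \<Longrightarrow> x \<le> y \<Longrightarrow> f y \<le> f x"
    and "\<And>x. \<bar>(deriv ^^ 4) (hfun f) x\<bar> \<le> M"
  shows "\<bar>hfun f x - hfun f 0 - (deriv ^^ 2) (hfun f) 0 / 2 * x^2 - (deriv ^^ 3) (hfun f) 0 / 6 * x^3\<bar>
      \<le> M / 24 * x^4"
    and "\<bar>kfun f x / 2 - (hfun f x - hfun f 0) - (deriv ^^ 3) (hfun f) 0 / 12 * x^3\<bar> \<le> M / 8 * x^4"
proof -
  have smooth: "higher_differentiable 4 (hfun f)"
    using higher_differentiable_hfun[of f 3] assms(1,2) by (simp add: numeral_eq_Suc)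
  then have "deriv (hfun f) 0 = 0"
    using higher_differentiable_DERIV[of 3 "hfun f"] hfun_le_at_mode[OF assms(1,3,4)]
    by (intro DERIV_local_max[of "hfun f" _ 0 1]) (auto simp: numeral_eq_Suc)
  note taylor = smooth this assms(5)
  show "\<bar>hfun f x - hfun f 0 - (deriv ^^ 2) (hfun f) 0 / 2 * x^2 - (deriv ^^ 3) (hfun f) 0 / 6 * x^3\<bar>
      \<le> M / 24 * x^4"
    by (rule maclaurin_cubic_bound[OF taylor])
  show "\<bar>kfun f x / 2 - (hfun f x - hfun f 0) - (deriv ^^ 3) (hfun f) 0 / 12 * x^3\<bar> \<le> M / 8 * x^4"
    using homogeneity_defect_bound[OF taylor] by (simp add: kfun_def mult_ac)
qed

lemma (in laplace_peak) Vfun_half_minus_Ifun_eq_wcov: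
  assumes "\<And>x. f x > 0" and U_eq: "\<And>x. U x = hfun f x - hfun f 0" and "\<beta> \<ge> 1"
    and "power_bounded 2 4 U" and "power_bounded 2 4 (kfun f)" and "continuous_on UNIV (kfun f)"
  shows "Vfun f \<beta> / 2 - Ifun f \<beta> = wcov (weight \<beta>) U (\<lambda>x. kfun f x / 2 - U x)"
proof -
  define h0 where "h0 = hfun f 0"
  have tilt: "tilt f \<beta> = (\<lambda>x. exp (\<beta> * h0) * weight \<beta> x)"
    using tilt_eq_exp[OF assms(1)] by (simp add: weight_def U_eq h0_def)
  have h: "hfun f = (\<lambda>x. U x + h0)"
    by (simp add: fun_eq_iff U_eq h0_def)
  have int: "integrable lborel (\<lambda>x. \<phi> x * weight \<beta> x)"
    if "power_bounded p q \<phi>" "continuous_on UNIV \<phi>" for \<phi> p q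
    using integrable_weight[OF \<open>\<beta> \<ge> 1\<close> that(2,1)] .
  have "wcov (weight \<beta>) (\<lambda>x. U x + h0) (kfun f) / 2 - wvar (weight \<beta>) (\<lambda>x. U x + h0)
      = wcov (weight \<beta>) U (\<lambda>x. kfun f x / 2 - U x)"
  proof (rule wcov_half_minus_wvar)
    show "(\<integral>x. weight \<beta> x \<partial>lborel) \<noteq> 0"
      using integral_weight_pos[OF \<open>\<beta> \<ge> 1\<close>] by simp
    show "integrable lborel (weight \<beta>)"
      using int[OF power_bounded_const[of 1]] by simp
    show "integrable lborel (\<lambda>x. U x * weight \<beta> x)"
      using int[OF assms(4)] continuous_U by simp
    show "integrable lborel (\<lambda>x. kfun f x * weight \<beta> x)"
      using int[OF assms(5,6)] .
    show "integrable lborel (\<lambda>x. U x * kfun f x * weight \<beta> x)"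
      using int[OF power_bounded_mult[OF assms(4,5)]] assms(6) continuous_U
      by (auto intro: continuous_intros)
    show "integrable lborel (\<lambda>x. U x * U x * weight \<beta> x)"
      using int[OF power_bounded_mult[OF assms(4,4)]] continuous_U
      by (auto intro: continuous_intros)
  qed
  then show ?thesis
    unfolding Vfun_def Ifun_def tilt wcov_scale_weight[OF exp_not_eq_zero]
      wvar_scale_weight[OF exp_not_eq_zero] h .
qed

lemma laplace_peak_hfun:
  fixes f :: "real \<Rightarrow> real" and M :: real
  assumes pos: "\<And>x. f x > 0" and smooth: "higher_differentiable 4 f"
    and unimodal_left: "\<And>x y. x \<le> y \<Longrightarrow> y \<le> 0 \<Longrightarrow> f x \<le> f y"
    and unimodal_right: "\<And>x y. 0 \<le> x \<Longrightarrow> x \<le> y \<Longrightarrow> f y \<le> f x"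
    and curved: "(deriv ^^ 2) (hfun f) 0 < 0"
    and h4_bound: "\<And>x. \<bar>(deriv ^^ 4) (hfun f) x\<bar> \<le> M"
    and moments: "\<And>m. integrable lborel (\<lambda>x. \<bar>x\<bar>^m * f x)"
  obtains K c \<delta> \<eta> where "laplace_peak (\<lambda>x. hfun f x - hfun f 0) K c \<delta> \<eta>"
proof (rule laplace_peak_of_taylor)
  have "higher_differentiable 2 f"
    using higher_differentiable_mono[OF smooth] by simp
  then show "continuous_on UNIV (\<lambda>x. hfun f x - hfun f 0)"
    using continuous_hfun_kfun(1)[OF pos] by (intro continuous_intros)
  show "\<bar>hfun f x - hfun f 0 - (deriv ^^ 2) (hfun f) 0 / 2 * x^2 - (deriv ^^ 3) (hfun f) 0 / 6 * x^3\<bar>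
      \<le> M / 24 * x^4" for x
    by (rule hfun_expansions(1)[OF pos smooth unimodal_left unimodal_right h4_bound])
  show "integrable lborel (\<lambda>x. \<bar>x\<bar>^m * exp (hfun f x - hfun f 0))" for m
    using integrable_mult_right[OF moments, of "1 / f 0" m] pos by (simp add: hfun_def exp_diff)
  show "hfun f x - hfun f 0 \<le> hfun f y - hfun f 0" if "x \<le> y" "y \<le> 0" for x y
    using hfun_mono[OF pos unimodal_left[OF that]] by simp
  show "hfun f y - hfun f 0 \<le> hfun f x - hfun f 0" if "0 \<le> x" "x \<le> y" for x y
    using hfun_mono[OF pos unimodal_right[OF that]] by simp
qed (use curved that in auto)

theorem Vfun_half_minus_Ifun_bigo:
  fixes f :: "real \<Rightarrow> real" and M :: real
  assumes pos: "\<And>x. f x > 0" and smooth: "higher_differentiable 4 f"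
    and unimodal_left: "\<And>x y. x \<le> y \<Longrightarrow> y \<le> 0 \<Longrightarrow> f x \<le> f y"
    and unimodal_right: "\<And>x y. 0 \<le> x \<Longrightarrow> x \<le> y \<Longrightarrow> f y \<le> f x"
    and curved: "(deriv ^^ 2) (hfun f) 0 < 0"
    and h4_bound: "\<And>x. \<bar>(deriv ^^ 4) (hfun f) x\<bar> \<le> M"
    and moments: "\<And>m. integrable lborel (\<lambda>x. \<bar>x\<bar>^m * f x)"
  shows "(\<lambda>\<beta>. Vfun f \<beta> / 2 - Ifun f \<beta>) \<in>
    O[at_top](\<lambda>\<beta>. \<beta> powr (- (if (deriv ^^ 3) (hfun f) 0 = 0 then 3 else 5 / 2)))"
proof -
  define U where "U x = hfun f x - hfun f 0" for x
  define D where "D x = kfun f x / 2 - U x" for x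
  define p :: nat where "p = (if (deriv ^^ 3) (hfun f) 0 = 0 then 4 else 3)"
  note expansions = hfun_expansions[OF pos smooth unimodal_left unimodal_right h4_bound]
  have "higher_differentiable 2 f"
    using higher_differentiable_mono[OF smooth] by simp
  note continuous = continuous_hfun_kfun[OF pos this]
  have cont_U: "continuous_on UNIV U"
    using continuous(1) by (simp add: U_def continuous_intros)
  obtain K c \<delta> \<eta> where "laplace_peak U K c \<delta> \<eta>"
    using laplace_peak_hfun[OF assms, folded U_def] by blast
  then interpret laplace_peak U K c \<delta> \<eta> .
  have U_pb: "power_bounded 2 4 U"
    using power_bounded_of_quadratic_expansion[OF expansions(1)[folded U_def]] .
  have D_pb: "power_bounded p 4 D"
    using power_bounded_of_cubic_expansion[OF expansions(2), folded U_def, folded D_def]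
    by (simp add: p_def)
  have "power_bounded 2 4 (\<lambda>x. U x + D x)"
    using power_bounded_mono[OF D_pb, of 2 4] U_pb by (auto intro: power_bounded_add simp: p_def)
  then have "power_bounded (0 + 2) (0 + 4) (\<lambda>x. 2 * (U x + D x))"
    by (rule power_bounded_mult[OF power_bounded_const]) simp_all
  then have k_pb: "power_bounded 2 4 (kfun f)"
    by (simp add: D_def numeral_2_eq_2)
  have "wcov (weight \<beta>) U D = Vfun f \<beta> / 2 - Ifun f \<beta>" if "\<beta> \<ge> 1" for \<beta>
    unfolding D_def using U_pb k_pb continuous(2) that
    by (intro Vfun_half_minus_Ifun_eq_wcov[symmetric] pos) (simp_all add: U_def)
  then have "eventually (\<lambda>\<beta>. wcov (weight \<beta>) U D = Vfun f \<beta> / 2 - Ifun f \<beta>) at_top"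
    by (rule eventually_mono[OF eventually_ge_at_top[of 1]])
  moreover have "(\<lambda>\<beta>. wcov (weight \<beta>) U D) \<in> O[at_top](\<lambda>\<beta>. \<beta> powr (- real (2 + p) / 2))"
    by (rule wcov_bigo[OF U_pb D_pb])
      (use cont_U continuous(2) in \<open>auto simp: p_def D_def intro!: continuous_intros\<close>)
  ultimately show ?thesis
    by (auto simp: p_def elim: landau_o.big.in_cong[THEN iffD1, rotated])
qed

lemma not_integrable_const_lborel:
  assumes "c \<noteq> (0::real)"
  shows "\<not> integrable lborel (\<lambda>_::real. c)"
proof
  assume "integrable lborel (\<lambda>_::real. c)"
  then have "(\<integral>\<^sup>+x. ennreal (norm c) \<partial>(lborel::real measure)) < \<infinity>"
    by (simp add: integrable_iff_bounded)
  then show False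
    using assms by (simp add: nn_integral_const ennreal_mult_less_top)
qed

(* If h''(0) = 0, the rescaling in gdens divides by sqrt 0 = 0 and g_beta is a positive constant.
   A constant is not integrable on the real line, so the junk value 0 of its integral makes every
   weighted mean, hence the variance, vanish. *)
lemma wvar_gdens_flat:
  assumes "(deriv ^^ 2) (hfun f) 0 = 0" and "f 0 > 0"
  shows "wvar (gdens f \<beta>) \<phi> = 0"
proof -
  have gdens: "gdens f \<beta> = (\<lambda>_. f 0 powr \<beta>)"
    using assms(1) by (simp add: gdens_def fun_eq_iff)
  have Z: "(\<integral>y. f 0 powr \<beta> \<partial>(lborel :: real measure)) = 0"
    by (rule not_integrable_integral_eq, rule not_integrable_const_lborel) (use assms(2) in simp)
  show ?thesis
    unfolding wvar_def wmean_def gdens Z by simp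
qed

lemma hfun_second_deriv_neg:
  fixes f :: "real \<Rightarrow> real" and \<gamma> :: real
  assumes pos: "\<And>x. f x > 0" and "higher_differentiable 3 f"
    and "\<And>x y. x \<le> y \<Longrightarrow> y \<le> 0 \<Longrightarrow> f x \<le> f y" and "\<And>x y. 0 \<le> x \<Longrightarrow> x \<le> y \<Longrightarrow> f y \<le> f x"
    and "\<gamma> > 0"
    and var_hyp: "(\<lambda>\<beta>. \<bar>wvar (gdens f \<beta>) (\<lambda>y. y^2) - 2\<bar>) \<in> O[at_top](\<lambda>\<beta>. \<beta> powr (- \<gamma>))"
  shows "(deriv ^^ 2) (hfun f) 0 < 0"
proof -
  have "higher_differentiable 3 (hfun f)"
    using higher_differentiable_hfun[of f 2] assms(1,2) by (simp add: numeral_eq_Suc)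
  then have "(deriv ^^ 2) (hfun f) 0 \<le> 0"
    using hfun_le_at_mode[OF assms(1,3,4)] by (rule second_deriv_nonpos_at_max)
  moreover have "(deriv ^^ 2) (hfun f) 0 \<noteq> 0"
  proof
    assume "(deriv ^^ 2) (hfun f) 0 = 0"
    then have "(\<lambda>_::real. 2::real) \<in> O[at_top](\<lambda>\<beta>. \<beta> powr (- \<gamma>))"
      using var_hyp pos[of 0] by (simp add: wvar_gdens_flat)
    moreover have "(\<lambda>\<beta>::real. \<beta> powr (- \<gamma>)) \<in> o[at_top](\<lambda>_. 1)"
      using \<open>\<gamma> > 0\<close> by real_asymp
    ultimately have "(\<lambda>_::real. 2::real) \<in> o[at_top](\<lambda>_. 1)"
      by (rule landau_o.big_small_trans)
    from landau_o.smallD[OF this, of 1] have "eventually (\<lambda>_::real. (2::real) \<le> 1) at_top"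
      by simp
    then show False
      by simp
  qed
  ultimately show ?thesis
    by simp
qed

theorem lemma4:
  fixes f H :: "real \<Rightarrow> real" and M \<gamma> :: real
  assumes pos: "\<And>x. f x > 0"
    and C4_deriv: "\<And>n x. n < 4 \<Longrightarrow> ((deriv ^^ n) f has_real_derivative (deriv ^^ Suc n) f x) (at x)"
    and C4_cont: "continuous_on UNIV ((deriv ^^ 4) f)"
    and unimodal_left: "\<And>x y. x \<le> y \<Longrightarrow> y \<le> 0 \<Longrightarrow> f x \<le> f y"
    and unimodal_right: "\<And>x y. 0 \<le> x \<Longrightarrow> x \<le> y \<Longrightarrow> f y \<le> f x"
    and fH: "\<And>x. f x = exp (- H x)"
    and regvar: "\<exists>\<alpha>>0. \<forall>x>0. ((\<lambda>t. H (t * x) / H t) \<longlongrightarrow> x powr \<alpha>) at_infinity"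
    and Mpos: "M > 0"
    and h4_bound: "\<And>x. \<bar>(deriv ^^ 4) (hfun f) x\<bar> < M"
    and \<gamma>pos: "\<gamma> > 0"
    and var_hyp: "(\<lambda>\<beta>. \<bar>wvar (gdens f \<beta>) (\<lambda>y. y^2) - 2\<bar>) \<in> O[at_top](\<lambda>\<beta>. \<beta> powr (- \<gamma>))"
  shows "(\<lambda>\<beta>. Vfun f \<beta> / 2 - Ifun f \<beta>) \<in>
           O[at_top](\<lambda>\<beta>. \<beta> powr (- (if (deriv ^^ 3) (hfun f) 0 = 0
                                           then min (2 + \<gamma>) 3 else min (2 + \<gamma>) (5/2))))"
proof -
  have smooth: "higher_differentiable 4 f"
    using C4_deriv by (simp add: higher_differentiable_def)
  have curved: "(deriv ^^ 2) (hfun f) 0 < 0"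
    using higher_differentiable_mono[OF smooth]
    by (intro hfun_second_deriv_neg[OF pos _ unimodal_left unimodal_right \<gamma>pos var_hyp]) simp
  have moments: "integrable lborel (\<lambda>x. \<bar>x\<bar>^m * f x)" for m
    using higher_differentiable_continuous[of 3 f] smooth
    by (intro regularly_varying_moments[OF _ fH unimodal_left unimodal_right regvar])
      (simp add: numeral_eq_Suc)
  have "(\<lambda>\<beta>. Vfun f \<beta> / 2 - Ifun f \<beta>) \<in>
      O[at_top](\<lambda>\<beta>. \<beta> powr (- (if (deriv ^^ 3) (hfun f) 0 = 0 then 3 else 5 / 2)))"
    using Vfun_half_minus_Ifun_bigo[OF pos smooth unimodal_left unimodal_right curved _ moments]
      h4_bound less_imp_le by blast
  also have "(\<lambda>\<beta>. \<beta> powr (- (if (deriv ^^ 3) (hfun f) 0 = 0 then 3 else 5 / 2))) \<in>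
      O[at_top](\<lambda>\<beta>. \<beta> powr (- (if (deriv ^^ 3) (hfun f) 0 = 0
                                   then min (2 + \<gamma>) 3 else min (2 + \<gamma>) (5/2))))"
    using min.cobounded2[of "2 + \<gamma>" 3] min.cobounded2[of "2 + \<gamma>" "5 / 2"]
    by (intro powr_bigo_mono) auto
  finally show ?thesis .
qed

end
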